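(* Let $\mathcal D$ be a distribution of $(p,y)\in[0,1]\times\{0,1\}$ and $m^*=m^*(\mathcal D)$. If $m^*=+\infty$, then $\mathsf{SCDL}(\mathcal D)=0$. If $m^*<+\infty$, then (1) $\mathsf{SCDL}(\mathcal D)=\max\{\mathsf{SCDL}_{m^*}(\mathcal D),1/m^*\}\in[1/m^*,2/m^* )$, and (2) $\mathsf{SCDL}_{2m^*}(\mathcal D)\ge\mathsf{SCDL}(\mathcal D)$.
   Context: For $x\in\mathbb R$ write $x_+=\max\{x,0\}$. For a distribution $\mathcal D$ of $(p,y)\in[0,1]\times\{0,1\}$, a positive integer $m$ and $i\in\{0,\ldots,m\}$, let $w_i(p)=(1-|mp-i|)_+$, $\pi_i=\mathbb E_{\mathcal D}[w_i(p)]$ and $q_i=\mathbb E_{\mathcal D}[w_i(p)y]/\pi_i$ (terms with $\pi_i=0$ are $0$). Define $$\mathsf{SCDL}_m(\mathcal D)=\max_{i=0,\ldots,m}\Big(\sum_{j=0}^{i}\pi_j\big(q_j-\tfrac{i+1}{m}\big)_+ +\sum_{j=i+1}^{m}\pi_j\big(\tfrac im-q_j\big)_+\Big),\quad \mathsf{SCDL}(\mathcal D)=\inf_{m\in\{2^1,2^2,\ldots\}}\max\{\mathsf{SCDL}_m(\mathcal D),1/m\}.$$ $m^*(\mathcal D)$ is the smallest $m\in\{2^1,2^2,\ldots\}$ such that $\mathsf{SCDL}_{2m}(\mathcal D)\ge1/m$, and $m^*(\mathcal D)=+\infty$ if no such $m$ exists. *)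

theory Defs
  imports "HOL-Analysis.Analysis" "HOL-Probability.Probability" "HOL-Library.Extended_Nat"
begin

text \<open>A distribution D of (p,y) in [0,1] x {0,1} is a probability measure on real x bool
  (y = True encodes label 1) concentrated on [0,1] for the first coordinate.\<close>

definition is_pred_dist :: "(real \<times> bool) measure \<Rightarrow> bool" where
  "is_pred_dist M \<longleftrightarrow> prob_space M \<and>
     sets M = sets (borel \<Otimes>\<^sub>M count_space (UNIV :: bool set)) \<and>
     (AE x in M. fst x \<in> {0..1})"

definition wgt :: "nat \<Rightarrow> nat \<Rightarrow> real \<Rightarrow> real" where
  "wgt m i p = max (1 - \<bar>real m * p - real i\<bar>) 0"

definition piw :: "(real \<times> bool) measure \<Rightarrow> nat \<Rightarrow> nat \<Rightarrow> real" where
  "piw M m i = (\<integral>x. wgt m i (fst x) \<partial>M)"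

definition qw :: "(real \<times> bool) measure \<Rightarrow> nat \<Rightarrow> nat \<Rightarrow> real" where
  "qw M m i = (if piw M m i = 0 then 0
      else (\<integral>x. wgt m i (fst x) * (if snd x then 1 else 0) \<partial>M) / piw M m i)"

definition SCDL_m :: "(real \<times> bool) measure \<Rightarrow> nat \<Rightarrow> real" where
  "SCDL_m M m = Max ((\<lambda>i.
      (\<Sum>j\<in>{0..i}. piw M m j * max (qw M m j - real (i + 1) / real m) 0)
    + (\<Sum>j\<in>{i+1..m}. piw M m j * max (real i / real m - qw M m j) 0)) ` {0..m})"

definition SCDL :: "(real \<times> bool) measure \<Rightarrow> real" where
  "SCDL M = (INF k\<in>{1::nat..}. max (SCDL_m M (2 ^ k)) (1 / real ((2::nat) ^ k)))"

definition mstar :: "(real \<times> bool) measure \<Rightarrow> enat" where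
  "mstar M = (if \<exists>k::nat. k \<ge> 1 \<and> SCDL_m M (2 * 2 ^ k) \<ge> 1 / real ((2::nat) ^ k)
     then enat (2 ^ (LEAST k::nat. k \<ge> 1 \<and> SCDL_m M (2 * 2 ^ k) \<ge> 1 / real ((2::nat) ^ k)))
     else \<infinity>)"

end

theory Submission
  imports Defs
begin

(* The tent function of mesh 1/m at node j is the (1/2, 1, 1/2)-combination of the tents of mesh
   1/(2m) at nodes 2j-1, 2j, 2j+1. The bias pi_j (q_j - c) is linear in the tent, so it refines
   in the same way, and the positive parts making up the i-th term of SCDL_m are dominated by
   half the sum of the terms 2i and 2i+1 of SCDL_2m. Hence a_k = SCDL_(2^k) is nondecreasing.
   For k below the first crossing K (the first k with a_(k+1) >= 2^-k) the value
   max(a_k, 2^-k) is at least 2^-k >= max(a_K, 2^-K), and beyond K it is at least a_(K+1) >= 2^-K;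
   so the infimum is attained at m* = 2^K, and it is 0 if there is no crossing.
   SCDL_2 <= 1/2 rules out the crossing k = 0. *)

(* Nodes are integers: refining the tent at node 0 involves the tent at node -1, which vanishes
   on [0,1] (tent_vanishes_outside). *)
definition tent :: "nat \<Rightarrow> int \<Rightarrow> real \<Rightarrow> real" where
  "tent n k p = max (1 - \<bar>real n * p - real_of_int k\<bar>) 0"

lemma wgt_eq_tent: "wgt m i p = tent m (int i) p"
  by (simp add: wgt_def tent_def)

lemma tent_nonneg: "0 \<le> tent n k p"
  by (simp add: tent_def)

lemma tent_le_1: "tent n k p \<le> 1"
  by (simp add: tent_def)

lemma tent_refine:
  "tent m j p = tent (2*m) (2*j-1) p / 2 + tent (2*m) (2*j) p + tent (2*m) (2*j+1) p / 2"
proof -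
  define x where "x = real m * p - real_of_int j"
  have shifted: "real (2*m) * p - real_of_int (2*j-1) = 2*x + 1"
    "real (2*m) * p - real_of_int (2*j) = 2*x"
    "real (2*m) * p - real_of_int (2*j+1) = 2*x - 1"
    by (simp_all add: x_def algebra_simps)
  show ?thesis
    unfolding tent_def shifted x_def[symmetric] by (auto simp: max_def abs_if)
qed

lemma tent_vanishes_outside:
  assumes "p \<in> {0..1}"
  shows "tent n (-1) p = 0" "tent n (int n + 1) p = 0"
  using assms mult_left_le[of p "real n"] by (auto simp: tent_def)

lemma pred_dist_measurable:
  assumes "is_pred_dist M" "f \<in> borel_measurable (borel \<Otimes>\<^sub>M count_space UNIV)"
  shows "(f :: real \<times> bool \<Rightarrow> real) \<in> borel_measurable M"
  using assms measurable_cong_sets[of M "borel \<Otimes>\<^sub>M count_space UNIV"] by (auto simp: is_pred_dist_def)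

lemma integrable_tent_label:
  assumes "is_pred_dist M"
  shows "integrable M (\<lambda>x. tent n k (fst x) * g (snd x))"
proof -
  interpret prob_space M
    using assms by (simp add: is_pred_dist_def)
  have "\<bar>tent n k (fst x) * g (snd x)\<bar> \<le> \<bar>g True\<bar> + \<bar>g False\<bar>" for x
  proof -
    have "\<bar>tent n k (fst x) * g (snd x)\<bar> \<le> 1 * \<bar>g (snd x)\<bar>"
      unfolding abs_mult using tent_nonneg tent_le_1 by (intro mult_right_mono) auto
    also have "\<dots> \<le> \<bar>g True\<bar> + \<bar>g False\<bar>"
      by (cases "snd x") auto
    finally show ?thesis .
  qed
  moreover have "(\<lambda>x. tent n k (fst x) * g (snd x)) \<in> borel_measurable M"
    by (rule pred_dist_measurable[OF assms]) (unfold tent_def, measurable)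
  ultimately show ?thesis
    by (intro integrable_const_bound[where B="\<bar>g True\<bar> + \<bar>g False\<bar>"]) auto
qed

lemma integrable_tent:
  "is_pred_dist M \<Longrightarrow> integrable M (\<lambda>x. tent n k (fst x))"
  using integrable_tent_label[of M n k "\<lambda>_. 1"] by simp

lemma integral_tent_label_le:
  assumes "is_pred_dist M" "\<And>b. g b \<le> w"
  shows "(\<integral>x. tent n k (fst x) * g (snd x) \<partial>M) \<le> max w 0"
proof -
  interpret prob_space M
    using assms by (simp add: is_pred_dist_def)
  have "t * v \<le> max w 0" if "0 \<le> t" "t \<le> 1" "v \<le> w" for t v :: real
    using that mult_left_le_one_le[of v t] mult_nonneg_nonpos[of t v]
    by (cases "0 \<le> v") auto
  then show ?thesis
    using assms tent_nonneg tent_le_1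
    by (intro integral_le_const integrable_tent_label) auto
qed

definition bias :: "(real \<times> bool) measure \<Rightarrow> nat \<Rightarrow> int \<Rightarrow> real \<Rightarrow> real" where
  "bias M n k c = (\<integral>x. tent n k (fst x) * (of_bool (snd x) - c) \<partial>M)"

lemma piw_nonneg: "0 \<le> piw M m j"
  unfolding piw_def by (rule integral_nonneg_AE) (simp add: wgt_def)

lemma piw_mult_qw:
  assumes "is_pred_dist M"
  shows "piw M m j * qw M m j = (\<integral>x. tent m (int j) (fst x) * of_bool (snd x) \<partial>M)"
proof -
  let ?A = "\<integral>x. tent m (int j) (fst x) * of_bool (snd x) \<partial>M"
  have "0 \<le> ?A"
    by (rule integral_nonneg_AE) (simp add: tent_nonneg)
  moreover have "?A \<le> piw M m j"
    unfolding piw_def wgt_eq_tent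
    using assms tent_nonneg
    by (intro integral_mono integrable_tent_label integrable_tent) (auto simp: of_bool_def)
  ultimately show ?thesis
    by (auto simp: qw_def wgt_eq_tent of_bool_def)
qed

lemma bias_eq:
  assumes "is_pred_dist M"
  shows "bias M m (int j) c = piw M m j * (qw M m j - c)"
proof -
  have "bias M m (int j) c
      = (\<integral>x. tent m (int j) (fst x) * of_bool (snd x) - c * tent m (int j) (fst x) \<partial>M)"
    unfolding bias_def by (simp add: algebra_simps)
  also have "\<dots> = (\<integral>x. tent m (int j) (fst x) * of_bool (snd x) \<partial>M)
      - c * (\<integral>x. tent m (int j) (fst x) \<partial>M)"
    using assms by (simp add: integrable_tent_label integrable_tent)
  finally show ?thesis
    unfolding right_diff_distrib piw_mult_qw[OF assms] by (simp add: piw_def wgt_eq_tent mult.commute)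
qed

lemma bias_refine:
  assumes "is_pred_dist M"
  shows "bias M m j c = bias M (2*m) (2*j-1) c / 2 + bias M (2*m) (2*j) c + bias M (2*m) (2*j+1) c / 2"
proof -
  let ?f = "\<lambda>k x. tent (2*m) k (fst x) * (of_bool (snd x) - c)"
  note integrable = integrable_tent_label[OF assms]
  have "bias M m j c = (\<integral>x. ?f (2*j-1) x / 2 + ?f (2*j) x + ?f (2*j+1) x / 2 \<partial>M)"
    unfolding bias_def by (subst tent_refine) (simp add: algebra_simps)
  also have "\<dots> = (\<integral>x. ?f (2*j-1) x / 2 + ?f (2*j) x \<partial>M)
      + (\<integral>x. ?f (2*j+1) x / 2 \<partial>M)"
    by (intro Bochner_Integration.integral_add Bochner_Integration.integrable_add
        integrable_divide integrable)
  also have "(\<integral>x. ?f (2*j-1) x / 2 + ?f (2*j) x \<partial>M)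
      = (\<integral>x. ?f (2*j-1) x / 2 \<partial>M) + (\<integral>x. ?f (2*j) x \<partial>M)"
    by (intro Bochner_Integration.integral_add integrable_divide integrable)
  finally show ?thesis
    unfolding bias_def by simp
qed

lemma bias_antimono:
  assumes "is_pred_dist M" "c \<le> c'"
  shows "bias M n k c' \<le> bias M n k c"
  unfolding bias_def
  using assms tent_nonneg by (intro integral_mono integrable_tent_label mult_left_mono) auto

lemma bias_le: "is_pred_dist M \<Longrightarrow> bias M n k c \<le> max (1 - c) 0"
  unfolding bias_def by (rule integral_tent_label_le) auto

lemma neg_bias_le:
  assumes "is_pred_dist M"
  shows "- bias M n k c \<le> max c 0"
proof -
  have "- bias M n k c = (\<integral>x. tent n k (fst x) * (c - of_bool (snd x)) \<partial>M)"
    unfolding bias_def integral_minus[symmetric] by (simp add: algebra_simps)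
  also have "\<dots> \<le> max c 0"
    using assms by (rule integral_tent_label_le) auto
  finally show ?thesis .
qed

lemma bias_outside:
  assumes "is_pred_dist M"
  shows "bias M n (-1) c = 0" "bias M n (int n + 1) c = 0"
proof -
  have "bias M n k c = 0" if "\<And>p. p \<in> {0..1} \<Longrightarrow> tent n k p = 0" for k
  proof -
    have "AE x in M. fst x \<in> {0..1}"
      using assms by (simp add: is_pred_dist_def)
    then have "AE x in M. tent n k (fst x) * (of_bool (snd x) - c) = 0"
      by (rule eventually_mono) (simp add: that)
    then show ?thesis
      unfolding bias_def by (rule integral_eq_zero_AE)
  qed
  then show "bias M n (-1) c = 0" "bias M n (int n + 1) c = 0"
    by (simp_all add: tent_vanishes_outside)
qed

(* The i-th term of SCDL_m with its two thresholds (i+1)/m and i/m decoupled, so that the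
   terms 2i and 2i+1 of SCDL_2m can be compared with it at common thresholds. *)
definition split_loss :: "(real \<times> bool) measure \<Rightarrow> nat \<Rightarrow> nat \<Rightarrow> real \<Rightarrow> real \<Rightarrow> real" where
  "split_loss M n i c c' = (\<Sum>j\<in>{0..i}. max (bias M n (int j) c) 0)
     + (\<Sum>j\<in>{i+1..n}. max (- bias M n (int j) c') 0)"

definition SCDL_term :: "(real \<times> bool) measure \<Rightarrow> nat \<Rightarrow> nat \<Rightarrow> real" where
  "SCDL_term M m i = split_loss M m i (real (i + 1) / real m) (real i / real m)"

lemma SCDL_m_eq_Max_SCDL_term:
  assumes "is_pred_dist M"
  shows "SCDL_m M m = Max (SCDL_term M m ` {0..m})"
proof -
  have "piw M m j * max (c - qw M m j) 0 = max (- bias M m (int j) c) 0"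
    "piw M m j * max (qw M m j - c) 0 = max (bias M m (int j) c) 0" for j c
    using piw_nonneg[of M m j] by (simp_all add: bias_eq[OF assms] max_mult_distrib_left algebra_simps)
  then show ?thesis
    unfolding SCDL_m_def SCDL_term_def split_loss_def by simp
qed

lemma SCDL_term_nonneg: "0 \<le> SCDL_term M m i"
  unfolding SCDL_term_def split_loss_def by (intro add_nonneg_nonneg sum_nonneg) auto

lemma SCDL_term_le_SCDL_m: "is_pred_dist M \<Longrightarrow> i \<le> m \<Longrightarrow> SCDL_term M m i \<le> SCDL_m M m"
  by (simp add: SCDL_m_eq_Max_SCDL_term)

lemma SCDL_m_nonneg: "is_pred_dist M \<Longrightarrow> 0 \<le> SCDL_m M m"
  using SCDL_term_le_SCDL_m[of M 0 m] SCDL_term_nonneg[of M m 0] by linarith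

lemma SCDL_term_last:
  assumes "is_pred_dist M" "m \<ge> 1"
  shows "SCDL_term M m m = 0"
proof -
  have "1 \<le> real (m + 1) / real m"
    using assms(2) by (simp add: field_simps)
  then have "max (bias M m (int j) (real (m + 1) / real m)) 0 = 0" for j
    using bias_le[OF assms(1), of m "int j" "real (m + 1) / real m"] by simp
  then show ?thesis
    unfolding SCDL_term_def split_loss_def by simp
qed

lemma sum_refined_triples:
  fixes x :: "int \<Rightarrow> real"
  assumes "l \<le> u"
  shows "(\<Sum>j\<in>{l..u}. x (2*int j - 1) / 2 + x (2*int j) + x (2*int j + 1) / 2)
    = x (2*int l - 1) / 2 + (\<Sum>k\<in>{2*l..2*u}. x (int k)) + x (2*int u + 1) / 2"
  using assms
proof (induction u rule: dec_induct)
  case base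
  show ?case
    by (simp add: sum.atLeast_Suc_atMost algebra_simps)
next
  case (step u)
  have "{2*l..2 * Suc u} = insert (Suc (Suc (2*u))) (insert (Suc (2*u)) {2*l..2*u})"
    using step.hyps by auto
  then have "(\<Sum>k\<in>{2*l..2 * Suc u}. x (int k))
      = (\<Sum>k\<in>{2*l..2*u}. x (int k)) + x (2*int u + 1) + x (2*int u + 2)"
    by (simp add: algebra_simps)
  then show ?case
    using step.hyps step.IH by (simp add: algebra_simps)
qed

lemma sum_max_refined_triples_le:
  fixes x :: "int \<Rightarrow> real"
  assumes "l \<le> u"
  shows "(\<Sum>j\<in>{l..u}. max (x (2*int j - 1) / 2 + x (2*int j) + x (2*int j + 1) / 2) 0)
    \<le> max (x (2*int l - 1)) 0 / 2 + (\<Sum>k\<in>{2*l..2*u}. max (x (int k)) 0) + max (x (2*int u + 1)) 0 / 2"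
proof -
  have "max (a / 2 + b + c / 2) 0 \<le> max a 0 / 2 + max b 0 + max c 0 / 2" for a b c :: real
    by (simp add: max_def)
  then have "(\<Sum>j\<in>{l..u}. max (x (2*int j - 1) / 2 + x (2*int j) + x (2*int j + 1) / 2) 0)
      \<le> (\<Sum>j\<in>{l..u}. max (x (2*int j - 1)) 0 / 2 + max (x (2*int j)) 0 + max (x (2*int j + 1)) 0 / 2)"
    by (rule sum_mono)
  also have "\<dots> = max (x (2*int l - 1)) 0 / 2 + (\<Sum>k\<in>{2*l..2*u}. max (x (int k)) 0)
      + max (x (2*int u + 1)) 0 / 2"
    using sum_refined_triples[OF assms, of "\<lambda>k. max (x k) 0"] by simp
  finally show ?thesis .
qed

lemma split_loss_antimono:
  assumes "is_pred_dist M" "c \<le> d" "d' \<le> c'"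
  shows "split_loss M n i d d' \<le> split_loss M n i c c'"
  unfolding split_loss_def
  using assms by (intro add_mono sum_mono max.mono) (auto intro: bias_antimono)

lemma split_loss_refine:
  assumes pd: "is_pred_dist M" and "i < m"
  shows "2 * split_loss M m i c c' \<le> split_loss M (2*m) (2*i) c c' + split_loss M (2*m) (2*i+1) c c'"
proof -
  define a where "a = (\<lambda>k. bias M (2*m) k c)"
  define b where "b = (\<lambda>k. - bias M (2*m) k c')"
  define A where "A = (\<Sum>k\<in>{0..2*i}. max (a (int k)) 0)"
  define B where "B = (\<Sum>k\<in>{2*i+2..2*m}. max (b (int k)) 0)"
  have "split_loss M m i c c'
      = (\<Sum>j\<in>{0..i}. max (a (2*int j - 1) / 2 + a (2*int j) + a (2*int j + 1) / 2) 0)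
      + (\<Sum>j\<in>{i+1..m}. max (b (2*int j - 1) / 2 + b (2*int j) + b (2*int j + 1) / 2) 0)"
    unfolding split_loss_def a_def b_def bias_refine[OF pd, of m] by simp
  also have "\<dots> \<le> A + max (a (2*int i + 1)) 0 / 2 + max (b (2*int i + 1)) 0 / 2 + B"
  proof -
    have "a (-1) = 0" "b (2*int m + 1) = 0"
      unfolding a_def b_def using bias_outside[OF pd, of "2*m"] by simp_all
    then show ?thesis
      using sum_max_refined_triples_le[of 0 i a] sum_max_refined_triples_le[of "i+1" m b] assms(2)
      unfolding A_def B_def by (simp add: algebra_simps)
  qed
  finally have "split_loss M m i c c' \<le> A + max (a (2*int i + 1)) 0 / 2 + max (b (2*int i + 1)) 0 / 2 + B" .
  moreover have "split_loss M (2*m) (2*i+1) c c' = A + max (a (2*int i + 1)) 0 + B"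
    unfolding split_loss_def A_def B_def a_def b_def by (simp add: add_ac)
  moreover have "split_loss M (2*m) (2*i) c c' = A + max (b (2*int i + 1)) 0 + B"
  proof -
    have "{2*i+1..2*m} = insert (2*i+1) {2*i+2..2*m}"
      using assms(2) by auto
    then show ?thesis
      unfolding split_loss_def A_def B_def a_def b_def by (simp add: add_ac)
  qed
  ultimately show ?thesis
    by linarith
qed

lemma SCDL_term_refine:
  assumes pd: "is_pred_dist M" and "i < m"
  shows "2 * SCDL_term M m i \<le> SCDL_term M (2*m) (2*i) + SCDL_term M (2*m) (2*i+1)"
proof -
  define c where "c = real (i + 1) / real m"
  define c' where "c' = real i / real m"
  have "real m > 0"
    using assms(2) by simp
  then have "c = real (2*i+1+1) / real (2*m)" "c' \<le> real (2*i+1) / real (2*m)"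
    "real (2*i+1) / real (2*m) \<le> c" "c' = real (2*i) / real (2*m)"
    unfolding c_def c'_def by (simp_all add: field_simps)
  then have "split_loss M (2*m) (2*i+1) c c' \<le> SCDL_term M (2*m) (2*i+1)"
    "split_loss M (2*m) (2*i) c c' \<le> SCDL_term M (2*m) (2*i)"
    unfolding SCDL_term_def by (auto intro: split_loss_antimono[OF pd])
  moreover have "SCDL_term M m i = split_loss M m i c c'"
    unfolding SCDL_term_def c_def c'_def ..
  ultimately show ?thesis
    using split_loss_refine[OF assms, of c c'] by linarith
qed

lemma SCDL_m_le_double:
  assumes pd: "is_pred_dist M" and "m \<ge> 1"
  shows "SCDL_m M m \<le> SCDL_m M (2*m)"
proof -
  have "SCDL_term M m i \<le> SCDL_m M (2*m)" if "i \<le> m" for i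
  proof (cases "i < m")
    case True
    then have "SCDL_term M (2*m) (2*i) \<le> SCDL_m M (2*m)" "SCDL_term M (2*m) (2*i+1) \<le> SCDL_m M (2*m)"
      by (simp_all add: SCDL_term_le_SCDL_m[OF pd])
    then show ?thesis
      using SCDL_term_refine[OF pd True] by linarith
  next
    case False
    then show ?thesis
      using that SCDL_term_last[OF assms] SCDL_m_nonneg[OF pd] by simp
  qed
  then show ?thesis
    unfolding SCDL_m_eq_Max_SCDL_term[OF pd, of m] by simp
qed

lemma SCDL_m_2_le:
  assumes pd: "is_pred_dist M"
  shows "SCDL_m M 2 \<le> 1/2"
proof -
  have "{0..2::nat} = {0, 1, 2}" "{0..1::nat} = {0, 1}" "{1..2::nat} = {1, 2}"
    by auto
  moreover note bias_le[OF pd, of 2 0 "1/2"] bias_le[OF pd, of 2 0 1] bias_le[OF pd, of 2 1 1]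
    neg_bias_le[OF pd, of 2 1 0] neg_bias_le[OF pd, of 2 2 0] neg_bias_le[OF pd, of 2 2 "1/2"]
    SCDL_term_last[OF pd, of 2]
  ultimately show ?thesis
    unfolding SCDL_m_eq_Max_SCDL_term[OF pd] SCDL_term_def split_loss_def
    by (simp add: numeral_2_eq_2)
qed

lemma bdd_below_max_dyadic:
  fixes a :: "nat \<Rightarrow> real"
  shows "bdd_below ((\<lambda>k. max (a k) (1 / 2^k)) ` K)"
  by (rule bdd_belowI[of _ 0]) (auto intro: max.coboundedI2)

lemma inverse_power2_antimono: "k \<le> j \<Longrightarrow> 1 / 2^j \<le> (1::real) / 2^k"
  by (intro divide_left_mono power_increasing) auto

lemma INF_max_dyadic_eq_0:
  fixes a :: "nat \<Rightarrow> real"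
  assumes "\<And>k. k \<ge> 1 \<Longrightarrow> a (Suc k) < 1 / 2^k"
  shows "(INF k\<in>{1..}. max (a k) (1 / 2^k)) = 0"
proof -
  let ?S = "INF k\<in>{1..}. max (a k) (1 / 2^k)"
  have "0 \<le> ?S"
    by (rule cINF_greatest) (auto intro: max.coboundedI2)
  moreover have "?S \<le> (1/2)^n" for n
  proof -
    have "?S \<le> max (a (Suc (Suc n))) (1 / 2^Suc (Suc n))"
      by (rule cINF_lower[OF bdd_below_max_dyadic]) simp
    also have "\<dots> \<le> (1/2)^n"
      using assms[of "Suc n"] by (simp add: power_one_over field_simps)
    finally show ?thesis .
  qed
  moreover have "\<not> 0 < ?S"
  proof
    assume "0 < ?S"
    then obtain n where "(1/2)^n < ?S"
      using real_arch_pow_inv[of ?S "1/2"] by auto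
    with \<open>?S \<le> (1/2)^n\<close> show False
      by simp
  qed
  ultimately show ?thesis
    by simp
qed

lemma INF_max_dyadic_eq_first_crossing:
  fixes a :: "nat \<Rightarrow> real"
  assumes "mono a" "0 < K" "1 / 2^K \<le> a (Suc K)" "\<And>k. k < K \<Longrightarrow> a (Suc k) < 1 / 2^k"
  shows "(INF k\<in>{1..}. max (a k) (1 / 2^k)) = max (a K) (1 / 2^K)"
proof (rule antisym)
  show "(INF k\<in>{1..}. max (a k) (1 / 2^k)) \<le> max (a K) (1 / 2^K)"
    using assms(2) by (intro cINF_lower[OF bdd_below_max_dyadic]) simp
  have "max (a K) (1 / 2^K) \<le> max (a k) (1 / 2^k)" for k
  proof (cases "K < k")
    case True
    then have "a K \<le> a k" "a (Suc K) \<le> a k"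
      using assms(1) by (simp_all add: monoD)
    then show ?thesis
      using assms(3) by (simp add: max.coboundedI1)
  next
    case False
    show ?thesis
    proof (cases "k = K")
      case False
      with \<open>\<not> K < k\<close> have j: "K = Suc (K - 1)" "k \<le> K - 1"
        by arith+
      have "1 / 2^(K - 1) \<le> (1::real) / 2^k" "1 / 2^K \<le> (1::real) / 2^k"
        using j by (simp_all add: inverse_power2_antimono)
      then have "max (a K) (1 / 2^K) \<le> 1 / 2^k"
        using assms(4)[of "K - 1"] j by simp
      then show ?thesis
        by (simp add: le_max_iff_disj)
    qed simp
  qed
  then show "max (a K) (1 / 2^K) \<le> (INF k\<in>{1..}. max (a k) (1 / 2^k))"
    by (intro cINF_greatest) auto
qed

lemma INF_max_dyadic_first_crossing:
  fixes a :: "nat \<Rightarrow> real"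
  assumes "mono a" "a 1 < 1" "1 / 2^K \<le> a (Suc K)" "\<And>k. k < K \<Longrightarrow> a (Suc k) < 1 / 2^k"
  shows "(INF k\<in>{1..}. max (a k) (1 / 2^k)) = max (a K) (1 / 2^K)"
    and "1 / 2^K \<le> (INF k\<in>{1..}. max (a k) (1 / 2^k))"
    and "(INF k\<in>{1..}. max (a k) (1 / 2^k)) < 2 / 2^K"
    and "(INF k\<in>{1..}. max (a k) (1 / 2^k)) \<le> a (Suc K)"
proof -
  have "0 < K"
    using assms(2,3) by (cases K) auto
  then show eq: "(INF k\<in>{1..}. max (a k) (1 / 2^k)) = max (a K) (1 / 2^K)"
    using assms by (intro INF_max_dyadic_eq_first_crossing)
  have "a K < 2 / 2^K"
    using assms(4)[of "K - 1"] \<open>0 < K\<close> by (cases K) auto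
  moreover have "a K \<le> a (Suc K)"
    using assms(1) by (simp add: monoD)
  ultimately show "1 / 2^K \<le> (INF k\<in>{1..}. max (a k) (1 / 2^k))"
    "(INF k\<in>{1..}. max (a k) (1 / 2^k)) < 2 / 2^K"
    "(INF k\<in>{1..}. max (a k) (1 / 2^k)) \<le> a (Suc K)"
    using assms(3) unfolding eq by (auto simp: divide_strict_right_mono)
qed

lemma mstar_eq_first_crossing:
  assumes "is_pred_dist M"
  shows "mstar M = (if \<exists>k. 1 / 2^k \<le> SCDL_m M (2^Suc k)
    then enat (2 ^ (LEAST k. 1 / 2^k \<le> SCDL_m M (2^Suc k))) else \<infinity>)"
proof -
  have "(k \<ge> 1 \<and> SCDL_m M (2 * 2^k) \<ge> 1 / real ((2::nat)^k))
      \<longleftrightarrow> 1 / 2^k \<le> SCDL_m M (2^Suc k)" for k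
    using SCDL_m_2_le[OF assms] by (cases k) auto
  then show ?thesis
    unfolding mstar_def by presburger
qed

theorem lemma3p5:
  fixes M :: "(real \<times> bool) measure"
  assumes "is_pred_dist M"
  shows "(mstar M = \<infinity> \<longrightarrow> SCDL M = 0) \<and>
         (\<forall>m::nat. mstar M = enat m \<longrightarrow>
            SCDL M = max (SCDL_m M m) (1 / real m) \<and>
            1 / real m \<le> SCDL M \<and> SCDL M < 2 / real m \<and>
            SCDL_m M (2 * m) \<ge> SCDL M)"
proof -
  define a where "a k = SCDL_m M (2^k)" for k
  define crosses where "crosses k \<longleftrightarrow> 1 / 2^k \<le> a (Suc k)" for k
  have "mono a"
    unfolding mono_iff_le_Suc a_def using SCDL_m_le_double[OF assms] by simp
  have "a 1 < 1"
    using SCDL_m_2_le[OF assms] by (simp add: a_def)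
  have SCDL_eq: "SCDL M = (INF k\<in>{1..}. max (a k) (1 / 2^k))"
    by (simp add: SCDL_def a_def)
  have mstar_eq: "mstar M = (if \<exists>k. crosses k then enat (2 ^ (LEAST k. crosses k)) else \<infinity>)"
    unfolding mstar_eq_first_crossing[OF assms] crosses_def a_def ..
  show ?thesis
  proof (intro conjI allI impI)
    assume "mstar M = \<infinity>"
    then show "SCDL M = 0"
      unfolding SCDL_eq by (intro INF_max_dyadic_eq_0) (auto simp: mstar_eq crosses_def not_le split: if_splits)
  next
    fix m assume "mstar M = enat m"
    then have "\<exists>k. crosses k"
      by (auto simp: mstar_eq split: if_splits)
    define K where "K = (LEAST k. crosses k)"
    have "crosses K"
      unfolding K_def using \<open>\<exists>k. crosses k\<close> by (rule LeastI_ex)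
    have "a (Suc k) < 1 / 2^k" if "k < K" for k
      using not_less_Least[OF that[unfolded K_def]] by (simp add: crosses_def)
    note first_crossing = INF_max_dyadic_first_crossing[OF \<open>mono a\<close> \<open>a 1 < 1\<close>
        \<open>crosses K\<close>[unfolded crosses_def] this, folded SCDL_eq]
    have "real m = 2^K" "SCDL_m M m = a K" "SCDL_m M (2 * m) = a (Suc K)"
      using \<open>mstar M = enat m\<close> \<open>\<exists>k. crosses k\<close> by (simp_all add: mstar_eq K_def a_def)
    then show "SCDL M = max (SCDL_m M m) (1 / real m)" "1 / real m \<le> SCDL M"
      "SCDL M < 2 / real m" "SCDL_m M (2 * m) \<ge> SCDL M"
      using first_crossing by simp_all
  qed
qed

end
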